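(* Let $(X,d)$ be an $F$-space with non-decreasing metric $d$ and let $\mathcal{E}(x)=\{e_n(x)\}_{n=0}^\infty$ be a scale on $X$. The following are equivalent: (i) there exists $\{\varepsilon_n\}\searrow0$ such that $e_n(x)=\mathbf{O}(\varepsilon_n)$ for all $x\in X$; (ii) there exist $\{\varepsilon_n\}\searrow0$, $C>0$ and $r_0>0$ such that $e_n(x)\le C\varepsilon_n$ for all $n\in\mathbb{N}$ and all $x\in B(0,r_0)$. Consequently, the scale $\mathcal{E}$ satisfies Shapiro's theorem on $X$ if and only if $$\inf_{n\in\mathbb{N}}\ \sup_{x\in B(0,r)\cap X_{\mathcal{E}}}e_n(x)>0\quad\text{for all } r>0.$$
   Context: An $F$-space is a complete metric vector space with translation-invariant metric $d$; $d$ is non-decreasing if $d(\alpha x,0)\le d(x,0)$ for $0\le\alpha\le1$. Write $\|x\|=d(x,0)$ and $B(0,r)=\{x:d(x,0)\le r\}$. A map $\mathcal{E}:X\to\ell^\infty$, $\mathcal{E}(x)=\{e_n(x)\}_{n=0}^\infty$ with each $e_n:X\to[0,\infty)$, is a scale on $X$ if: (i) there is $C_1>0$ with $C_1\|x\|\ge e_n(x)\ge e_{n+1}(x)$ for all $x,n$, and each $e_n$ is continuous; (ii) there exist a strictly increasing $K:\mathbb{N}\to\mathbb{N}$ and $C_2>0$ with $e_{K(n)}(x+y)\le C_2(e_n(x)+e_n(y))$ for all $x,y,n$; (iii) there is $\phi:[0,\infty)\to[0,\infty)$ with $e_n(\lambda x)\le\phi(|\lambda|)e_n(x)$ for all scalars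 $\lambda$, and $e_n(-x)=e_n(x)$. $X_{\mathcal{E}}=\{x\in X:\mathcal{E}(x)\in c_0\}$. The scale $\mathcal{E}$ satisfies Shapiro's theorem if for every non-increasing sequence $\{\varepsilon_n\}\in c_0$ of nonnegative reals there exists $x\in X_{\mathcal{E}}$ with $e_n(x)\neq\mathbf{O}(\varepsilon_n)$. The notation $\{\varepsilon_n\}\searrow0$ means a non-increasing sequence of nonnegative reals converging to $0$. *)

theory Defs
  imports "HOL-Analysis.Analysis" "HOL-Library.Landau_Symbols"
begin

text \<open>F-space over the reals: a real vector space with a translation-invariant
 metric d, for which scalar multiplication is (jointly, sequentially) continuous
 (continuity of addition follows from translation invariance), and which is complete.\<close>
definition F_space :: "('a::real_vector \<Rightarrow> 'a \<Rightarrow> real) \<Rightarrow> bool" where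
  "F_space d \<longleftrightarrow>
     (\<forall>x y. d x y = 0 \<longleftrightarrow> x = y) \<and>
     (\<forall>x y. d x y = d y x) \<and>
     (\<forall>x y z. d x z \<le> d x y + d y z) \<and>
     (\<forall>x y z. d (x + z) (y + z) = d x y) \<and>
     (\<forall>(t::nat \<Rightarrow> real) c (s::nat \<Rightarrow> 'a) x.
        t \<longlonglongrightarrow> c \<longrightarrow> (\<lambda>k. d (s k) x) \<longlonglongrightarrow> 0 \<longrightarrow>
        (\<lambda>k. d (t k *\<^sub>R s k) (c *\<^sub>R x)) \<longlonglongrightarrow> 0) \<and>
     (\<forall>s::nat \<Rightarrow> 'a. (\<forall>\<epsilon>>0. \<exists>N. \<forall>m\<ge>N. \<forall>n\<ge>N. d (s m) (s n) < \<epsilon>) \<longrightarrow>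
        (\<exists>x. (\<lambda>k. d (s k) x) \<longlonglongrightarrow> 0))"

definition nondecreasing_metric :: "('a::real_vector \<Rightarrow> 'a \<Rightarrow> real) \<Rightarrow> bool" where
  "nondecreasing_metric d \<longleftrightarrow>
     (\<forall>x (\<alpha>::real). 0 \<le> \<alpha> \<and> \<alpha> \<le> 1 \<longrightarrow> d (\<alpha> *\<^sub>R x) 0 \<le> d x 0)"

text \<open>A scale E = {e_n} on (X,d); e n x stands for e_n(x). Membership of E(x) in
 l-infinity is implied by condition (i).\<close>
definition is_scale :: "('a::real_vector \<Rightarrow> 'a \<Rightarrow> real) \<Rightarrow> (nat \<Rightarrow> 'a \<Rightarrow> real) \<Rightarrow> bool" where
  "is_scale d e \<longleftrightarrow>
     (\<forall>n x. 0 \<le> e n x) \<and>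
     (\<exists>C1>0. \<forall>x n. e n x \<le> C1 * d x 0 \<and> e (Suc n) x \<le> e n x) \<and>
     (\<forall>n (s::nat \<Rightarrow> 'a) x. (\<lambda>k. d (s k) x) \<longlonglongrightarrow> 0 \<longrightarrow> (\<lambda>k. e n (s k)) \<longlonglongrightarrow> e n x) \<and>
     (\<exists>(K::nat \<Rightarrow> nat) C2. strict_mono K \<and> C2 > 0 \<and>
        (\<forall>x y n. e (K n) (x + y) \<le> C2 * (e n x + e n y))) \<and>
     (\<exists>\<phi>::real \<Rightarrow> real. (\<forall>t\<ge>0. \<phi> t \<ge> 0) \<and>
        (\<forall>n x (c::real). e n (c *\<^sub>R x) \<le> \<phi> \<bar>c\<bar> * e n x)) \<and>
     (\<forall>n x. e n (- x) = e n x)"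

definition scale_space :: "(nat \<Rightarrow> 'a \<Rightarrow> real) \<Rightarrow> 'a set" where
  "scale_space e = {x. (\<lambda>n. e n x) \<longlonglongrightarrow> 0}"

definition decr_to_zero :: "(nat \<Rightarrow> real) \<Rightarrow> bool" where
  "decr_to_zero \<epsilon> \<longleftrightarrow> (\<forall>n. 0 \<le> \<epsilon> n) \<and> decseq \<epsilon> \<and> \<epsilon> \<longlonglongrightarrow> 0"

definition satisfies_Shapiro :: "(nat \<Rightarrow> 'a \<Rightarrow> real) \<Rightarrow> bool" where
  "satisfies_Shapiro e \<longleftrightarrow>
     (\<forall>\<epsilon>. decr_to_zero \<epsilon> \<longrightarrow> (\<exists>x\<in>scale_space e. (\<lambda>n. e n x) \<notin> O(\<epsilon>)))"

end

theory Submission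
  imports Defs
begin

(*
  (i) implies (ii) by Baire's theorem: the closed sets F_k = {x. \<forall>n. e_n(x) \<le> k \<epsilon>_n} cover X,
  so some F_k contains a ball around a point x0. Since e_{K n}(x) \<le> C2 (e_n(x0 + x) + e_n(-x0)),
  every x near 0 then satisfies e_{K n}(x) \<le> 2 C2 k \<epsilon>_n, and monotonicity in n transfers this
  to all indices m through the largest n with K n \<le> m.
  (ii) implies (i) because every x has a small multiple c x near 0 and e_n(x) \<le> \<phi>(1/c) e_n(c x).
  The Shapiro criterion is the same argument inside the closed subspace X_E: if the infimum vanishes
  for some r, the suprema of e_n over B(0,r) \<inter> X_E form a sequence that dominates every x in X_E,
  and conversely a uniform bound near 0 forces the infimum to be 0.
*)

definition index_below :: "(nat \<Rightarrow> nat) \<Rightarrow> nat \<Rightarrow> nat" where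
  "index_below K m = (if K 0 \<le> m then GREATEST n. K n \<le> m else 0)"

lemma index_below_le:
  assumes "strict_mono K" "K 0 \<le> m"
  shows "K (index_below K m) \<le> m"
proof -
  have "K n \<le> m \<Longrightarrow> n \<le> m" for n
    using seq_suble[OF assms(1), of n] by linarith
  then show ?thesis
    using GreatestI_nat[of "\<lambda>n. K n \<le> m" 0 m] assms(2) by (simp add: index_below_def)
qed

lemma le_index_below:
  assumes "strict_mono K" "K n \<le> m"
  shows "n \<le> index_below K m"
proof -
  have "K 0 \<le> m"
    using assms strict_mono_less_eq[OF assms(1), of 0 n] by simp
  moreover have "K n' \<le> m \<Longrightarrow> n' \<le> m" for n'
    using seq_suble[OF assms(1), of n'] by linarith
  ultimately show ?thesis
    using Greatest_le_nat[of "\<lambda>n. K n \<le> m" n m] assms(2) by (simp add: index_below_def)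
qed

lemma index_below_eq_0: "m < K 0 \<Longrightarrow> index_below K m = 0"
  by (simp add: index_below_def)

lemma mono_index_below:
  assumes "strict_mono K"
  shows "mono (index_below K)"
proof (rule monoI)
  fix m m' :: nat
  assume "m \<le> m'"
  show "index_below K m \<le> index_below K m'"
  proof (cases "K 0 \<le> m")
    case True
    then show ?thesis
      using assms index_below_le le_index_below \<open>m \<le> m'\<close> order.trans by metis
  qed (simp add: index_below_eq_0)
qed

lemma filterlim_index_below:
  assumes "strict_mono K"
  shows "filterlim (index_below K) at_top sequentially"
  unfolding filterlim_at_top eventually_sequentially using le_index_below[OF assms] by blast

lemma decr_to_zero_comp:
  assumes "decr_to_zero \<epsilon>" "mono j" "filterlim j at_top sequentially"
  shows "decr_to_zero (\<epsilon> \<circ> j)"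
proof -
  have "decseq (\<epsilon> \<circ> j)"
    using assms(1,2) by (simp add: decr_to_zero_def decseq_def monoD)
  moreover have "(\<epsilon> \<circ> j) \<longlonglongrightarrow> 0"
    using assms(1) filterlim_compose[OF _ assms(3)] by (auto simp: decr_to_zero_def o_def)
  ultimately show ?thesis
    using assms(1) by (simp add: decr_to_zero_def)
qed

lemma decr_to_zero_add_inverse:
  assumes "decr_to_zero \<epsilon>"
  shows "decr_to_zero (\<lambda>n. \<epsilon> n + inverse (real (Suc n)))"
proof -
  have "decseq (\<lambda>n. inverse (real (Suc n)))"
    by (rule decseq_SucI) (simp add: field_simps)
  then have "decseq (\<lambda>n. \<epsilon> n + inverse (real (Suc n)))"
    using assms by (simp add: decr_to_zero_def decseq_def add_mono)
  moreover have "(\<lambda>n. \<epsilon> n + inverse (real (Suc n))) \<longlonglongrightarrow> 0 + 0"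
    using assms LIMSEQ_inverse_real_of_nat by (intro tendsto_add) (auto simp: decr_to_zero_def)
  ultimately show ?thesis
    using assms by (simp add: decr_to_zero_def)
qed

lemma bigo_imp_le_mult:
  fixes f g :: "nat \<Rightarrow> real"
  assumes "f \<in> O(g)" "\<And>n. g n > 0"
  shows "\<exists>c. \<forall>n. f n \<le> c * g n"
proof -
  obtain c where c: "c > 0" "eventually (\<lambda>n. norm (f n) \<le> c * norm (g n)) at_top"
    using assms(1) by (rule landau_o.bigE)
  then obtain N where "\<And>n. n \<ge> N \<Longrightarrow> norm (f n) \<le> c * norm (g n)"
    unfolding eventually_at_top_linorder by blast
  then have N: "f n \<le> c * g n" if "n \<ge> N" for n
    using that assms(2)[of n] abs_ge_self[of "f n"] by fastforce
  define c' where "c' = max c (Max ((\<lambda>n. f n / g n) ` {..<N}))"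
  have "f n \<le> c' * g n" for n
  proof (cases "n < N")
    case True
    then have "f n / g n \<le> c'"
      unfolding c'_def by (intro max.coboundedI2 Max_ge) auto
    then show ?thesis
      using assms(2)[of n] by (simp add: divide_le_eq)
  next
    case False
    then have "f n \<le> c * g n" by (simp add: N)
    also have "\<dots> \<le> c' * g n"
      using assms(2)[of n] by (intro mult_right_mono) (auto simp: c'_def)
    finally show ?thesis .
  qed
  then show ?thesis by blast
qed

locale F_space_scale =
  fixes d :: "'a::real_vector \<Rightarrow> 'a \<Rightarrow> real" and e :: "nat \<Rightarrow> 'a \<Rightarrow> real"
    and K :: "nat \<Rightarrow> nat" and C1 C2 :: real and \<phi> :: "real \<Rightarrow> real"
  assumes F_space: "F_space d"
    and e_nonneg: "\<And>n x. 0 \<le> e n x"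
    and C1_pos: "C1 > 0"
    and e_le_C1: "\<And>n x. e n x \<le> C1 * d x 0"
    and e_Suc_le: "\<And>n x. e (Suc n) x \<le> e n x"
    and e_continuous: "\<And>n s x. (\<lambda>k. d (s k) x) \<longlonglongrightarrow> 0 \<Longrightarrow> (\<lambda>k. e n (s k)) \<longlonglongrightarrow> e n x"
    and strict_mono_K: "strict_mono K"
    and C2_pos: "C2 > 0"
    and e_K_add: "\<And>n x y. e (K n) (x + y) \<le> C2 * (e n x + e n y)"
    and phi_nonneg: "\<And>t. t \<ge> 0 \<Longrightarrow> \<phi> t \<ge> 0"
    and e_scaleR_le: "\<And>n c x. e n (c *\<^sub>R x) \<le> \<phi> \<bar>c\<bar> * e n x"
    and e_uminus: "\<And>n x. e n (- x) = e n x"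

lemma F_space_scale_if_is_scale:
  assumes "F_space d" "is_scale d e"
  obtains K C1 C2 \<phi> where "F_space_scale d e K C1 C2 \<phi>"
proof -
  obtain C1 K C2 \<phi> where
    "\<forall>n x. 0 \<le> e n x" "C1 > 0" "\<forall>x n. e n x \<le> C1 * d x 0 \<and> e (Suc n) x \<le> e n x"
    "\<forall>n s x. (\<lambda>k. d (s k) x) \<longlonglongrightarrow> 0 \<longrightarrow> (\<lambda>k. e n (s k)) \<longlonglongrightarrow> e n x"
    "strict_mono K" "C2 > 0" "\<forall>x y n. e (K n) (x + y) \<le> C2 * (e n x + e n y)"
    "\<forall>t\<ge>0. \<phi> t \<ge> 0" "\<forall>n x c. e n (c *\<^sub>R x) \<le> \<phi> \<bar>c\<bar> * e n x" "\<forall>n x. e n (- x) = e n x"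
    using assms(2) unfolding is_scale_def by blast
  with assms(1) have "F_space_scale d e K C1 C2 \<phi>"
    by unfold_locales auto
  then show thesis
    by (rule that)
qed

context F_space_scale
begin

lemma d_eq_0_iff: "d x y = 0 \<longleftrightarrow> x = y"
  and d_commute: "d x y = d y x"
  and d_triangle: "d x z \<le> d x y + d y z"
  and d_add_right: "d (x + z) (y + z) = d x y"
  using F_space unfolding F_space_def by blast+

lemma d_scaleR_tendsto:
  "t \<longlonglongrightarrow> c \<Longrightarrow> (\<lambda>k. d (s k) x) \<longlonglongrightarrow> 0 \<Longrightarrow> (\<lambda>k. d (t k *\<^sub>R s k) (c *\<^sub>R x)) \<longlonglongrightarrow> 0"
  using F_space unfolding F_space_def by blast

lemma d_Cauchy_convergent:
  "\<forall>\<epsilon>>0. \<exists>N. \<forall>m\<ge>N. \<forall>n\<ge>N. d (s m) (s n) < \<epsilon> \<Longrightarrow> \<exists>x. (\<lambda>k. d (s k) x) \<longlonglongrightarrow> 0"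
  using F_space unfolding F_space_def by blast

lemma d_self [simp]: "d x x = 0"
  by (simp add: d_eq_0_iff)

lemma d_nonneg: "0 \<le> d x y"
proof -
  have "0 \<le> d x y + d y x"
    using d_triangle[of x x y] by simp
  then show ?thesis
    using d_commute[of x y] by linarith
qed

lemma d_diff: "d x y = d (x - y) 0"
  using d_add_right[of x "-y" y] by simp

sublocale Metric_space UNIV d
  by unfold_locales (auto simp: d_nonneg d_commute d_eq_0_iff intro: d_triangle)

lemma limitin_iff_tendsto: "limitin mtopology s x sequentially \<longleftrightarrow> (\<lambda>k. d (s k) x) \<longlonglongrightarrow> 0"
  unfolding limit_metric_sequentially lim_sequentially using d_nonneg by simp

lemma mcomplete_UNIV: mcomplete
  unfolding mcomplete_def limitin_iff_tendsto
proof (intro allI impI)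
  fix \<sigma> :: "nat \<Rightarrow> 'a"
  assume "MCauchy \<sigma>"
  then have "\<forall>\<epsilon>>0. \<exists>N. \<forall>m\<ge>N. \<forall>n\<ge>N. d (\<sigma> m) (\<sigma> n) < \<epsilon>"
    unfolding MCauchy_def by simp
  then show "\<exists>x. (\<lambda>k. d (\<sigma> k) x) \<longlonglongrightarrow> 0"
    by (rule d_Cauchy_convergent)
qed

lemma small_positive_multiple:
  assumes "r > 0"
  obtains c where "c > 0" "d (c *\<^sub>R x) 0 < r"
proof -
  have "(\<lambda>k. d (inverse (real (Suc k)) *\<^sub>R x) (0 *\<^sub>R x)) \<longlonglongrightarrow> 0"
    by (rule d_scaleR_tendsto[OF LIMSEQ_inverse_real_of_nat]) simp
  then obtain k where "norm (d (inverse (real (Suc k)) *\<^sub>R x) (0 *\<^sub>R x) - 0) < r"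
    using LIMSEQ_D[OF _ assms] by blast
  then show thesis
    by (intro that[of "inverse (real (Suc k))"]) auto
qed

lemma e_zero [simp]: "e n 0 = 0"
  using e_le_C1[of n 0] e_nonneg[of n 0] by simp

lemma e_antimono: "m \<le> n \<Longrightarrow> e n x \<le> e m x"
  using decseq_SucI[of "\<lambda>n. e n x", OF e_Suc_le] by (simp add: decseq_def)

lemma e_le_e_index_below: "K 0 \<le> m \<Longrightarrow> e m x \<le> e (K (index_below K m)) x"
  by (rule e_antimono[OF index_below_le[OF strict_mono_K]])

lemma tendsto_zero_if_bound_along_K:
  assumes "\<And>n. e (K n) x \<le> g n" "g \<longlonglongrightarrow> 0"
  shows "(\<lambda>m. e m x) \<longlonglongrightarrow> 0"
proof (rule tendsto_sandwich[OF _ _ tendsto_const])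
  show "(\<lambda>m. g (index_below K m)) \<longlonglongrightarrow> 0"
    using filterlim_compose[OF assms(2) filterlim_index_below[OF strict_mono_K]] .
  show "\<forall>\<^sub>F m in sequentially. e m x \<le> g (index_below K m)"
    unfolding eventually_sequentially
  proof (intro exI allI impI)
    fix m
    assume "K 0 \<le> m"
    show "e m x \<le> g (index_below K m)"
      using order.trans[OF e_le_e_index_below[OF \<open>K 0 \<le> m\<close>] assms(1)] .
  qed
qed (simp add: e_nonneg)

lemma scale_space_add:
  assumes "x \<in> scale_space e" "y \<in> scale_space e"
  shows "x + y \<in> scale_space e"
proof -
  have "(\<lambda>n. C2 * (e n x + e n y)) \<longlonglongrightarrow> C2 * (0 + 0)"
    using assms unfolding scale_space_def by (intro tendsto_intros) auto
  then have "(\<lambda>n. C2 * (e n x + e n y)) \<longlonglongrightarrow> 0"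
    by simp
  then show ?thesis
    unfolding scale_space_def mem_Collect_eq
    by (rule tendsto_zero_if_bound_along_K[OF e_K_add])
qed

lemma scale_space_scaleR:
  assumes "x \<in> scale_space e"
  shows "c *\<^sub>R x \<in> scale_space e"
proof -
  have lim: "(\<lambda>n. \<phi> \<bar>c\<bar> * e n x) \<longlonglongrightarrow> \<phi> \<bar>c\<bar> * 0"
    using assms unfolding scale_space_def by (intro tendsto_intros) auto
  show ?thesis
    unfolding scale_space_def mem_Collect_eq
  proof (rule tendsto_sandwich[OF _ _ tendsto_const])
    show "\<forall>\<^sub>F n in sequentially. 0 \<le> e n (c *\<^sub>R x)"
      by (simp add: e_nonneg)
    show "\<forall>\<^sub>F n in sequentially. e n (c *\<^sub>R x) \<le> \<phi> \<bar>c\<bar> * e n x"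
      by (simp add: e_scaleR_le)
  qed (use lim in simp)
qed

lemma zero_in_scale_space: "0 \<in> scale_space e"
  by (simp add: scale_space_def)

lemma scale_space_closed_sequentially:
  assumes s: "range s \<subseteq> scale_space e" and lim: "(\<lambda>k. d (s k) x) \<longlonglongrightarrow> 0"
  shows "x \<in> scale_space e"
proof -
  have split: "e m x \<le> C2 * (C1 * d (s k) x + e (index_below K m) (s k))" if "K 0 \<le> m" for m k
  proof -
    have "e m x \<le> e (K (index_below K m)) ((x - s k) + s k)"
      using e_le_e_index_below[OF that] by simp
    also have "\<dots> \<le> C2 * (e (index_below K m) (x - s k) + e (index_below K m) (s k))"
      by (rule e_K_add)
    also have "\<dots> \<le> C2 * (C1 * d (s k) x + e (index_below K m) (s k))"
      using e_le_C1[of _ "x - s k"] d_diff[of x "s k"] d_commute[of x "s k"] C2_pos by simp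
    finally show ?thesis .
  qed
  show ?thesis
    unfolding scale_space_def mem_Collect_eq
  proof (rule LIMSEQ_I)
    fix \<eta> :: real
    assume "0 < \<eta>"
    then have pos: "0 < \<eta> / (2 * C2 * C1)" "0 < \<eta> / (2 * C2)"
      using C1_pos C2_pos by auto
    obtain k where "norm (d (s k) x - 0) < \<eta> / (2 * C2 * C1)"
      using LIMSEQ_D[OF lim pos(1)] by blast
    then have k: "d (s k) x < \<eta> / (2 * C2 * C1)"
      by simp
    have "(\<lambda>n. e n (s k)) \<longlonglongrightarrow> 0"
      using s unfolding scale_space_def by blast
    then obtain N1 where "\<forall>n\<ge>N1. norm (e n (s k) - 0) < \<eta> / (2 * C2)"
      using LIMSEQ_D[OF _ pos(2)] by blast
    then have N1: "\<And>n. n \<ge> N1 \<Longrightarrow> e n (s k) < \<eta> / (2 * C2)"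
      by (simp add: abs_less_iff)
    obtain N2 where N2: "\<And>m. m \<ge> N2 \<Longrightarrow> N1 \<le> index_below K m"
      using filterlim_index_below[OF strict_mono_K]
      unfolding filterlim_at_top eventually_sequentially by blast
    have "norm (e m x - 0) < \<eta>" if m: "max (K 0) N2 \<le> m" for m
    proof -
      have "e (index_below K m) (s k) < \<eta> / (2 * C2)"
        using N1 N2 m by simp
      have "e m x \<le> C2 * (C1 * d (s k) x + e (index_below K m) (s k))"
        using split m by simp
      also have "\<dots> < C2 * (C1 * (\<eta> / (2 * C2 * C1)) + \<eta> / (2 * C2))"
        using k \<open>e (index_below K m) (s k) < \<eta> / (2 * C2)\<close> C1_pos C2_pos
        by (intro mult_strict_left_mono add_strict_mono) simp_all
      also have "\<dots> = \<eta>"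
        using C1_pos C2_pos by (simp add: field_simps)
      finally show ?thesis
        using e_nonneg[of m x] by simp
    qed
    then show "\<exists>N. \<forall>m\<ge>N. norm (e m x - 0) < \<eta>"
      by blast
  qed
qed

lemma closedin_scale_space: "closedin mtopology (scale_space e)"
  unfolding metric_closedin_iff_sequentially_closed limitin_iff_tendsto
  using scale_space_closed_sequentially by blast

lemma closedin_e_le: "closedin mtopology {x. \<forall>n. e n x \<le> b n}"
proof -
  have "x \<in> {x. \<forall>n. e n x \<le> b n}"
    if "range s \<subseteq> {x. \<forall>n. e n x \<le> b n}" "(\<lambda>k. d (s k) x) \<longlonglongrightarrow> 0" for s x
  proof -
    have "e n x \<le> b n" for n
      using that by (intro LIMSEQ_le_const2[OF e_continuous]) auto
    then show ?thesis
      by simp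
  qed
  then show ?thesis
    unfolding metric_closedin_iff_sequentially_closed limitin_iff_tendsto by blast
qed

lemma Baire_bound_on_ball:
  assumes "closedin mtopology S" "S \<noteq> {}" "\<And>n. \<epsilon> n \<ge> 0"
    and bounded: "\<And>x. x \<in> S \<Longrightarrow> \<exists>c. \<forall>n. e n x \<le> c * \<epsilon> n"
  obtains k x0 r where "r > 0" "x0 \<in> S" "\<And>y n. y \<in> S \<Longrightarrow> d x0 y < r \<Longrightarrow> e n y \<le> k * \<epsilon> n"
proof -
  interpret Submetric UNIV d S
    by unfold_locales simp
  define F where "F k = S \<inter> {x. \<forall>n. e n x \<le> real k * \<epsilon> n}" for k
  have closed_F: "closedin sub.mtopology (F k)" for k
    unfolding F_def mtopology_submetric by (rule closedin_subtopology_Int_closed[OF closedin_e_le])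
  have "S \<subseteq> (\<Union>k. F k)"
  proof
    fix x
    assume "x \<in> S"
    then obtain c where "\<forall>n. e n x \<le> c * \<epsilon> n"
      using bounded by blast
    then have "\<forall>n. e n x \<le> real (nat \<lceil>c\<rceil>) * \<epsilon> n"
      using assms(3) by (meson order_trans mult_right_mono real_nat_ceiling_ge)
    with \<open>x \<in> S\<close> show "x \<in> (\<Union>k. F k)"
      by (auto simp: F_def)
  qed
  then have cover: "\<Union>(range F) = S"
    by (auto simp: F_def)
  have "sub.mcomplete"
    using closedin_mcomplete_imp_mcomplete assms(1) mcomplete_UNIV by blast
  have "\<exists>k. sub.mtopology interior_of F k \<noteq> {}"
  proof (rule ccontr)
    assume "\<nexists>k. sub.mtopology interior_of F k \<noteq> {}"
    then have "sub.mtopology interior_of \<Union>(range F) = {}"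
      using closed_F by (intro sub.metric_Baire_category_alt \<open>sub.mcomplete\<close>) auto
    then show False
      using cover assms(2) interior_of_topspace[of sub.mtopology] by simp
  qed
  then obtain k x0 where x0: "x0 \<in> sub.mtopology interior_of F k"
    by blast
  moreover have "openin sub.mtopology (sub.mtopology interior_of F k)"
    by simp
  ultimately obtain r where "r > 0" "sub.mball x0 r \<subseteq> sub.mtopology interior_of F k"
    unfolding sub.openin_mtopology by blast
  then have r: "r > 0" "sub.mball x0 r \<subseteq> F k"
    using interior_of_subset[of sub.mtopology "F k"] by auto
  have "x0 \<in> S"
    using x0 interior_of_subset[of sub.mtopology "F k"] by (auto simp: F_def)
  show thesis
  proof (rule that[OF r(1) \<open>x0 \<in> S\<close>])
    fix y n
    assume "y \<in> S" "d x0 y < r"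
    then have "y \<in> F k"
      using r(2) \<open>x0 \<in> S\<close> by (auto simp: sub.in_mball)
    then show "e n y \<le> real k * \<epsilon> n"
      by (simp add: F_def)
  qed
qed

lemma bound_along_K_near_zero:
  assumes "closedin mtopology S" "0 \<in> S" "\<And>x y. x \<in> S \<Longrightarrow> y \<in> S \<Longrightarrow> x + y \<in> S"
    and "\<And>n. \<epsilon> n \<ge> 0" "\<And>x. x \<in> S \<Longrightarrow> \<exists>c. \<forall>n. e n x \<le> c * \<epsilon> n"
  obtains r B where "r > 0" "\<And>x n. x \<in> S \<Longrightarrow> d x 0 < r \<Longrightarrow> e (K n) x \<le> B * \<epsilon> n"
proof -
  obtain k x0 r where r: "r > 0" and "x0 \<in> S"
    and ball: "\<And>y n. y \<in> S \<Longrightarrow> d x0 y < r \<Longrightarrow> e n y \<le> k * \<epsilon> n"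
    by (rule Baire_bound_on_ball[of S \<epsilon>]) (use assms in auto)
  have "e (K n) x \<le> (2 * C2 * k) * \<epsilon> n" if "x \<in> S" "d x 0 < r" for x n
  proof -
    have "d x0 (x0 + x) = d (0 + x0) (x + x0)"
      by (simp add: add.commute)
    also have "\<dots> = d x 0"
      by (metis d_add_right d_commute)
    finally have "e n (x0 + x) \<le> k * \<epsilon> n"
      using that assms(3) \<open>x0 \<in> S\<close> by (intro ball) auto
    moreover have "e n (- x0) \<le> k * \<epsilon> n"
      using ball[OF \<open>x0 \<in> S\<close>] r by (simp add: e_uminus)
    moreover have "e (K n) x \<le> C2 * (e n (x0 + x) + e n (- x0))"
      using e_K_add[of n "x0 + x" "- x0"] by simp
    ultimately have "e (K n) x \<le> C2 * (k * \<epsilon> n + k * \<epsilon> n)"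
      using C2_pos by (smt (verit) mult_left_mono)
    then show ?thesis
      by (simp add: algebra_simps)
  qed
  with r show thesis
    by (rule that)
qed

lemma uniform_bound_if_bound_along_K:
  assumes "decr_to_zero \<epsilon>" "\<And>n. \<epsilon> n > 0" "r > 0"
    and K_bound: "\<And>x n. x \<in> S \<Longrightarrow> d x 0 < r \<Longrightarrow> e (K n) x \<le> B * \<epsilon> n"
  shows "\<exists>\<epsilon>' C r0. decr_to_zero \<epsilon>' \<and> C > 0 \<and> r0 > 0 \<and>
           (\<forall>n x. x \<in> S \<longrightarrow> d x 0 \<le> r0 \<longrightarrow> e n x \<le> C * \<epsilon>' n)"
proof -
  define C where "C = max (max B (C1 * r / \<epsilon> 0)) 1"
  have "e m x \<le> C * \<epsilon> (index_below K m)" if "x \<in> S" "d x 0 \<le> r / 2" for m x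
  proof (cases "K 0 \<le> m")
    case True
    have "e m x \<le> e (K (index_below K m)) x"
      using e_le_e_index_below[OF True] .
    also have "\<dots> \<le> B * \<epsilon> (index_below K m)"
      using that assms(3) by (intro K_bound) auto
    also have "\<dots> \<le> C * \<epsilon> (index_below K m)"
      using assms(2) by (intro mult_right_mono) (auto simp: C_def less_imp_le)
    finally show ?thesis .
  next
    case False
    have "e m x \<le> C1 * d x 0"
      by (rule e_le_C1)
    also have "\<dots> \<le> C1 * r"
      using that(2) assms(3) C1_pos by (intro mult_left_mono) auto
    also have "\<dots> = (C1 * r / \<epsilon> 0) * \<epsilon> 0"
      using assms(2)[of 0] by simp
    also have "\<dots> \<le> C * \<epsilon> 0"
      using assms(2)[of 0] by (intro mult_right_mono) (auto simp: C_def)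
    also have "\<dots> = C * \<epsilon> (index_below K m)"
      using False by (simp add: index_below_eq_0)
    finally show ?thesis .
  qed
  moreover have "decr_to_zero (\<epsilon> \<circ> index_below K)"
    using assms(1) mono_index_below[OF strict_mono_K] filterlim_index_below[OF strict_mono_K]
    by (rule decr_to_zero_comp)
  moreover have "C > 0"
    by (simp add: C_def)
  ultimately show ?thesis
    using assms(3) by (intro exI[of _ "\<epsilon> \<circ> index_below K"] exI[of _ C] exI[of _ "r / 2"]) simp
qed

lemma uniform_bound_near_zero:
  assumes "closedin mtopology S" "0 \<in> S" "\<And>x y. x \<in> S \<Longrightarrow> y \<in> S \<Longrightarrow> x + y \<in> S"
    and \<epsilon>: "decr_to_zero \<epsilon>" and bigo: "\<And>x. x \<in> S \<Longrightarrow> (\<lambda>n. e n x) \<in> O(\<epsilon>)"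
  shows "\<exists>\<epsilon>' C r0. decr_to_zero \<epsilon>' \<and> C > 0 \<and> r0 > 0 \<and>
           (\<forall>n x. x \<in> S \<longrightarrow> d x 0 \<le> r0 \<longrightarrow> e n x \<le> C * \<epsilon>' n)"
proof -
  \<comment> \<open>Perturbing \<open>\<epsilon>\<close> to a positive sequence turns each big-O bound into a bound for all \<open>n\<close>.\<close>
  define \<delta> where "\<delta> n = \<epsilon> n + inverse (real (Suc n))" for n
  have pos: "\<delta> n > 0" for n
    using \<epsilon> by (simp add: \<delta>_def decr_to_zero_def add_nonneg_pos)
  have "\<epsilon> \<in> O(\<delta>)"
    using \<epsilon> by (intro landau_o.big_mono always_eventually) (auto simp: \<delta>_def decr_to_zero_def)
  have "\<exists>c. \<forall>n. e n x \<le> c * \<delta> n" if "x \<in> S" for x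
    using bigo_imp_le_mult[OF landau_o.big_trans[OF bigo[OF that] \<open>\<epsilon> \<in> O(\<delta>)\<close>] pos] .
  then obtain r B where "r > 0" "\<And>x n. x \<in> S \<Longrightarrow> d x 0 < r \<Longrightarrow> e (K n) x \<le> B * \<delta> n"
    using bound_along_K_near_zero[of S \<delta>, OF assms(1-3) less_imp_le[OF pos]] by blast
  moreover have "decr_to_zero \<delta>"
    unfolding \<delta>_def using \<epsilon> by (rule decr_to_zero_add_inverse)
  ultimately show ?thesis
    using uniform_bound_if_bound_along_K pos by blast
qed

lemma bigo_if_bound_near_zero:
  assumes "r > 0" "x \<in> T" "\<And>y c. y \<in> T \<Longrightarrow> c *\<^sub>R y \<in> T"
    and bound: "\<And>n y. y \<in> T \<Longrightarrow> d y 0 \<le> r \<Longrightarrow> e n y \<le> g n"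
  shows "(\<lambda>n. e n x) \<in> O(g)"
proof -
  obtain c where c: "c > 0" "d (c *\<^sub>R x) 0 < r"
    using small_positive_multiple[OF assms(1)] .
  have "norm (e n x) \<le> (\<phi> (1 / c) + 1) * norm (g n)" for n
  proof -
    have g: "e n (c *\<^sub>R x) \<le> g n"
      using bound assms(2,3) c(2) by simp
    then have "g n \<ge> 0"
      using e_nonneg order_trans by blast
    have "e n x \<le> \<phi> (1 / c) * e n (c *\<^sub>R x)"
      using e_scaleR_le[of n "1 / c" "c *\<^sub>R x"] c(1) by simp
    also have "\<dots> \<le> (\<phi> (1 / c) + 1) * g n"
      using g e_nonneg[of n "c *\<^sub>R x"] phi_nonneg[of "1 / c"] c(1)
      by (intro mult_mono) auto
    finally show ?thesis
      using \<open>g n \<ge> 0\<close> e_nonneg[of n] by simp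
  qed
  moreover have "\<phi> (1 / c) + 1 > 0"
    using phi_nonneg[of "1 / c"] c(1) by simp
  ultimately show ?thesis
    by (intro landau_o.bigI[of "\<phi> (1 / c) + 1"] always_eventually allI) auto
qed


definition ball_sup :: "real \<Rightarrow> nat \<Rightarrow> real" where
  "ball_sup r n = (SUP x\<in>{x. d x 0 \<le> r} \<inter> scale_space e. e n x)"

lemma bdd_above_ball: "bdd_above ((\<lambda>x. e n x) ` ({x. d x 0 \<le> r} \<inter> scale_space e))"
proof (rule bdd_aboveI2)
  fix x
  assume "x \<in> {x. d x 0 \<le> r} \<inter> scale_space e"
  then have "C1 * d x 0 \<le> C1 * r"
    using C1_pos by (intro mult_left_mono) auto
  then show "e n x \<le> C1 * r"
    using e_le_C1[of n x] by linarith
qed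

lemma e_le_ball_sup: "x \<in> scale_space e \<Longrightarrow> d x 0 \<le> r \<Longrightarrow> e n x \<le> ball_sup r n"
  unfolding ball_sup_def by (rule cSUP_upper[OF _ bdd_above_ball]) simp

lemma ball_sup_le:
  assumes "r \<ge> 0" "\<And>x. x \<in> scale_space e \<Longrightarrow> d x 0 \<le> r \<Longrightarrow> e n x \<le> b"
  shows "ball_sup r n \<le> b"
  unfolding ball_sup_def
proof (rule cSUP_least)
  have "0 \<in> {x. d x 0 \<le> r} \<inter> scale_space e"
    using assms(1) zero_in_scale_space by simp
  then show "{x. d x 0 \<le> r} \<inter> scale_space e \<noteq> {}"
    by blast
qed (use assms(2) in blast)

lemma ball_sup_nonneg: "r \<ge> 0 \<Longrightarrow> 0 \<le> ball_sup r n"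
  using e_le_ball_sup[OF zero_in_scale_space, of r n] by simp

lemma decseq_ball_sup: "r \<ge> 0 \<Longrightarrow> decseq (ball_sup r)"
  by (intro decseq_SucI ball_sup_le) (auto intro: order_trans[OF e_Suc_le e_le_ball_sup])

lemma ball_sup_tendsto_INF: "r \<ge> 0 \<Longrightarrow> ball_sup r \<longlonglongrightarrow> (INF n. ball_sup r n)"
  by (intro LIMSEQ_decseq_INF decseq_ball_sup bdd_belowI2[of _ 0] ball_sup_nonneg)

theorem pointwise_bigo_iff_uniform_bound:
  "(\<exists>\<epsilon>. decr_to_zero \<epsilon> \<and> (\<forall>x. (\<lambda>n. e n x) \<in> O(\<epsilon>))) \<longleftrightarrow>
   (\<exists>\<epsilon> C r0. decr_to_zero \<epsilon> \<and> C > 0 \<and> r0 > 0 \<and> (\<forall>n x. d x 0 \<le> r0 \<longrightarrow> e n x \<le> C * \<epsilon> n))"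
proof
  assume "\<exists>\<epsilon>. decr_to_zero \<epsilon> \<and> (\<forall>x. (\<lambda>n. e n x) \<in> O(\<epsilon>))"
  then obtain \<epsilon> where "decr_to_zero \<epsilon>" "\<And>x. (\<lambda>n. e n x) \<in> O(\<epsilon>)"
    by blast
  moreover have "closedin mtopology UNIV"
    using closedin_topspace[of mtopology] by simp
  ultimately show "\<exists>\<epsilon> C r0. decr_to_zero \<epsilon> \<and> C > 0 \<and> r0 > 0 \<and> (\<forall>n x. d x 0 \<le> r0 \<longrightarrow> e n x \<le> C * \<epsilon> n)"
    using uniform_bound_near_zero[of UNIV \<epsilon>] by simp
next
  assume "\<exists>\<epsilon> C r0. decr_to_zero \<epsilon> \<and> C > 0 \<and> r0 > 0 \<and> (\<forall>n x. d x 0 \<le> r0 \<longrightarrow> e n x \<le> C * \<epsilon> n)"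
  then obtain \<epsilon> C r0 where \<epsilon>: "decr_to_zero \<epsilon>" "r0 > 0" "\<And>n x. d x 0 \<le> r0 \<Longrightarrow> e n x \<le> C * \<epsilon> n"
    by blast
  have "(\<lambda>n. e n x) \<in> O(\<lambda>n. C * \<epsilon> n)" for x
    by (rule bigo_if_bound_near_zero[of r0 x UNIV]) (use \<epsilon> in auto)
  moreover have "(\<lambda>n. C * \<epsilon> n) \<in> O(\<epsilon>)"
    by simp
  ultimately show "\<exists>\<epsilon>. decr_to_zero \<epsilon> \<and> (\<forall>x. (\<lambda>n. e n x) \<in> O(\<epsilon>))"
    using \<epsilon>(1) landau_o.big_trans by blast
qed

theorem Shapiro_iff_INF_ball_sup_pos:
  "satisfies_Shapiro e \<longleftrightarrow> (\<forall>r>0. (INF n. ball_sup r n) > 0)"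
proof
  assume Shapiro: "satisfies_Shapiro e"
  show "\<forall>r>0. (INF n. ball_sup r n) > 0"
  proof (intro allI impI)
    fix r :: real
    assume "r > 0"
    have "(INF n. ball_sup r n) \<ge> 0"
      using \<open>r > 0\<close> by (intro cINF_greatest ball_sup_nonneg) auto
    moreover have "(INF n. ball_sup r n) \<noteq> 0"
    proof
      assume "(INF n. ball_sup r n) = 0"
      then have "decr_to_zero (ball_sup r)"
        using ball_sup_tendsto_INF[of r] decseq_ball_sup[of r] ball_sup_nonneg[of r] \<open>r > 0\<close>
        unfolding decr_to_zero_def by auto
      then obtain x where "x \<in> scale_space e" "(\<lambda>n. e n x) \<notin> O(ball_sup r)"
        using Shapiro unfolding satisfies_Shapiro_def by blast
      moreover have "(\<lambda>n. e n x) \<in> O(ball_sup r)"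
        using \<open>r > 0\<close> \<open>x \<in> scale_space e\<close>
        by (rule bigo_if_bound_near_zero) (auto intro: scale_space_scaleR e_le_ball_sup)
      ultimately show False
        by blast
    qed
    ultimately show "(INF n. ball_sup r n) > 0"
      by simp
  qed
next
  assume pos: "\<forall>r>0. (INF n. ball_sup r n) > 0"
  show "satisfies_Shapiro e"
  proof (rule ccontr)
    assume "\<not> satisfies_Shapiro e"
    then obtain \<epsilon> where \<epsilon>: "decr_to_zero \<epsilon>" "\<And>x. x \<in> scale_space e \<Longrightarrow> (\<lambda>n. e n x) \<in> O(\<epsilon>)"
      unfolding satisfies_Shapiro_def by blast
    obtain \<epsilon>' C r0 where \<epsilon>': "decr_to_zero \<epsilon>'" "r0 > 0"
      "\<And>n x. x \<in> scale_space e \<Longrightarrow> d x 0 \<le> r0 \<Longrightarrow> e n x \<le> C * \<epsilon>' n"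
      using uniform_bound_near_zero[OF closedin_scale_space zero_in_scale_space scale_space_add \<epsilon>]
      by blast
    have "(INF n. ball_sup r0 n) \<le> C * \<epsilon>' n" for n
    proof -
      have "(INF n. ball_sup r0 n) \<le> ball_sup r0 n"
        using \<epsilon>'(2) by (intro cINF_lower bdd_belowI2[of _ 0] ball_sup_nonneg) auto
      also have "\<dots> \<le> C * \<epsilon>' n"
        using \<epsilon>'(2,3) by (intro ball_sup_le) auto
      finally show ?thesis .
    qed
    moreover have "(\<lambda>n. C * \<epsilon>' n) \<longlonglongrightarrow> 0"
      using \<epsilon>'(1) by (intro tendsto_mult_right_zero) (simp add: decr_to_zero_def)
    ultimately have "(INF n. ball_sup r0 n) \<le> 0"
      by (intro LIMSEQ_le_const[of "\<lambda>n. C * \<epsilon>' n"]) auto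
    then show False
      using pos \<epsilon>'(2) by force
  qed
qed

end

theorem mainTheorem7:
  fixes d :: "'a::real_vector \<Rightarrow> 'a \<Rightarrow> real"
    and e :: "nat \<Rightarrow> 'a \<Rightarrow> real"
  assumes "F_space d" and "nondecreasing_metric d" and "is_scale d e"
  shows "((\<exists>\<epsilon>. decr_to_zero \<epsilon> \<and> (\<forall>x. (\<lambda>n. e n x) \<in> O(\<epsilon>)))
          \<longleftrightarrow> (\<exists>\<epsilon> C r0. decr_to_zero \<epsilon> \<and> C > 0 \<and> r0 > 0 \<and>
                 (\<forall>n x. d x 0 \<le> r0 \<longrightarrow> e n x \<le> C * \<epsilon> n)))
       \<and> (satisfies_Shapiro e \<longleftrightarrow>
          (\<forall>r>0. (INF n. SUP x\<in>{x. d x 0 \<le> r} \<inter> scale_space e. e n x) > 0))"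
proof -
  obtain K C1 C2 \<phi> where "F_space_scale d e K C1 C2 \<phi>"
    using F_space_scale_if_is_scale[OF assms(1,3)] .
  then interpret F_space_scale d e K C1 C2 \<phi> .
  show ?thesis
    using pointwise_bigo_iff_uniform_bound Shapiro_iff_INF_ball_sup_pos
    unfolding ball_sup_def by simp
qed

end
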